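(* Let $A\in\mathbb{R}^{n\times n}$ with $\rho(A)<1$, $C\in\mathbb{R}^{m\times n}$, and $Q\in\mathbb{R}^{n\times n}$, $R\in\mathbb{R}^{m\times m}$ symmetric positive definite, with $(A,C)$ observable and $(A,Q^{1/2})$ controllable. Let $\bar P$ be the unique stabilizing positive definite solution of $$\bar P = A\bar PA^{\intercal}+Q-(A\bar PA^{\intercal}+Q)C^{\intercal}\big(C(A\bar PA^{\intercal}+Q)C^{\intercal}+R\big)^{-1}C(A\bar PA^{\intercal}+Q),$$ and let $P^{OP}=L(A,Q)$. Let $\bar\gamma\in(0,1)$ and $\mu\in(0,1)$ (in particular $\mu<1$ and $\bar\gamma<1$). Let $(\lambda_k)_{k\ge1}$ be i.i.d. $\{0,1\}$-valued with $\mathbb{P}[\lambda_k=0]=\bar\gamma$, and $(u_k)_{k\ge1}$ i.i.d. $\{0,1\}$-valued with $\mathbb{P}[u_k=0]=\mu$, independent of $(\lambda_k)$. With a fixed symmetric positive semidefinite $P_0$, define for $k\ge1$: $P_k=\bar P$ if $(\lambda_k,u_k)=(1,1)$, and $P_k=AP_{k-1}A^{\intercal}+Q$ otherwise. Let $J(\mu)=\operatorname{tr}\lim_{k\to\infty}\mathbb{E}[P_k]$. Then $J(\mu)<\operatorname{tr}P^{OP}$.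
   Context: For a square matrix $T$ with $\rho(T)<1$ and a symmetric matrix $U$, $L(T,U)$ denotes the unique solution $V$ of $V=TVT^{\intercal}+U$, equivalently $L(T,U)=\sum_{j=0}^{\infty}T^jU(T^{\intercal})^j$; $P^{OP}$ is the open-loop (prediction-only) error covariance. $P_k$ models the error covariance of a legitimate user who receives the sensor's Kalman estimate only when the packet arrives and is not noise, and otherwise predicts with the model. *)

theory Defs
  imports "HOL-Analysis.Analysis" "HOL-Probability.Probability"
begin

primrec mpow :: "real^'n^'n \<Rightarrow> nat \<Rightarrow> real^'n^'n" where
  "mpow A 0 = mat 1"
| "mpow A (Suc k) = A ** mpow A k"

definition cmat :: "real^'n^'n \<Rightarrow> complex^'n^'n" where
  "cmat A = (\<chi> i j. complex_of_real (A $ i $ j))"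

definition eigenvalues_c :: "real^'n^'n \<Rightarrow> complex set" where
  "eigenvalues_c A = {c. \<exists>v::complex^'n. v \<noteq> 0 \<and> cmat A *v v = c *s v}"

definition spectral_radius :: "real^'n^'n \<Rightarrow> real" where
  "spectral_radius A = Max (norm ` eigenvalues_c A)"

definition pos_def :: "real^'n^'n \<Rightarrow> bool" where
  "pos_def M \<longleftrightarrow> transpose M = M \<and> (\<forall>x. x \<noteq> 0 \<longrightarrow> 0 < x \<bullet> (M *v x))"

definition pos_semidef :: "real^'n^'n \<Rightarrow> bool" where
  "pos_semidef M \<longleftrightarrow> transpose M = M \<and> (\<forall>x. 0 \<le> x \<bullet> (M *v x))"

definition msqrt :: "real^'n^'n \<Rightarrow> real^'n^'n" where
  "msqrt Q = (THE S. pos_semidef S \<and> S ** S = Q)"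

text \<open>Observability of (A,C): the observability matrix [C; CA; ...; CA^(n-1)] has full column rank.\<close>
definition observable :: "real^'n^'n \<Rightarrow> real^'n^'m \<Rightarrow> bool" where
  "observable A C \<longleftrightarrow>
     (\<forall>x::real^'n. (\<forall>i<CARD('n). C *v (mpow A i *v x) = 0) \<longrightarrow> x = 0)"

text \<open>Controllability of (A,B): [B, AB, ..., A^(n-1)B] has full row rank.\<close>
definition controllable :: "real^'n^'n \<Rightarrow> real^'k^'n \<Rightarrow> bool" where
  "controllable A B \<longleftrightarrow>
     (\<forall>x::real^'n. (\<forall>i<CARD('n). x v* (mpow A i ** B) = 0) \<longrightarrow> x = 0)"

definition Lyap :: "real^'n^'n \<Rightarrow> real^'n^'n \<Rightarrow> real^'n^'n" where
  "Lyap T U = (\<Sum>j. mpow T j ** U ** transpose (mpow T j))"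

definition riccati :: "real^'n^'n \<Rightarrow> real^'n^'m \<Rightarrow> real^'n^'n \<Rightarrow> real^'m^'m \<Rightarrow> real^'n^'n \<Rightarrow> real^'n^'n" where
  "riccati A C Q R P = (let M = A ** P ** transpose A + Q in
      M - M ** transpose C ** matrix_inv (C ** M ** transpose C + R) ** C ** M)"

definition kgain :: "real^'n^'n \<Rightarrow> real^'n^'m \<Rightarrow> real^'n^'n \<Rightarrow> real^'m^'m \<Rightarrow> real^'n^'n \<Rightarrow> real^'m^'n" where
  "kgain A C Q R P = (let M = A ** P ** transpose A + Q in
      M ** transpose C ** matrix_inv (C ** M ** transpose C + R))"

text \<open>Error covariance of the legitimate user: reset to Pbar iff (lambda_k,u_k)=(1,1)
  (True encodes 1).\<close>
primrec Pseq :: "real^'n^'n \<Rightarrow> real^'n^'n \<Rightarrow> real^'n^'n \<Rightarrow> real^'n^'n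
    \<Rightarrow> (nat \<Rightarrow> 'w \<Rightarrow> bool) \<Rightarrow> (nat \<Rightarrow> 'w \<Rightarrow> bool) \<Rightarrow> nat \<Rightarrow> 'w \<Rightarrow> real^'n^'n" where
  "Pseq A Q Pbar P0 lam u 0 \<omega> = P0"
| "Pseq A Q Pbar P0 lam u (Suc k) \<omega> =
     (if lam (Suc k) \<omega> \<and> u (Suc k) \<omega> then Pbar
      else A ** Pseq A Q Pbar P0 lam u k \<omega> ** transpose A + Q)"

end

theory Submission
  imports Defs "Jordan_Normal_Form.Spectral_Radius"
begin

(* Let g Y = A Y A^T + Q, L = Lyap A Q its fixpoint and p = (1 - gbar)(1 - mu) the reset
   probability. If the last reset up to time k happened j steps ago then P_k = g^j Pbar, and if
   there was none P_k = g^k P0; hence E[P_k] converges to the geometric mixture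
   sum_j p (1 - p)^j g^j Pbar. Since g^j Pbar - L = A^j (Pbar - L) (A^T)^j, it suffices that
   Pbar - L is negative semidefinite with negative trace. The Riccati equation gives
   Pbar - L = A (Pbar - L) A^T - K with a positive semidefinite correction K, so iterating and
   using A^j -> 0 yields Pbar - L <= -K; and tr K > 0 because C <> 0 by observability. *)

hide_const (open) Matrix.mat Spectral_Radius.spectral_radius

no_notation Matrix.vec_index (infixl \<open>$\<close> 100)

section \<open>Matrix algebra\<close>

lemma mpow_Suc_right: "mpow X (Suc k) = mpow X k ** X"
  by (induction k) (auto simp: matrix_mul_assoc)

lemma mpow_scaleR: "mpow (r *\<^sub>R X) k = r ^ k *\<^sub>R mpow X k"
  by (induction k) (auto simp: scalar_matrix_assoc[symmetric] matrix_scalar_ac)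

lemma matrix_add_rdistrib: "((X::real^'n^'m) + Y) ** Z = X ** Z + Y ** Z"
  by (simp add: matrix_matrix_mult_def Finite_Cartesian_Product.vec_eq_iff sum.distrib distrib_right)

lemma linear_matrix_sandwich: "linear (\<lambda>X::real^'n^'m. U ** X ** V)"
  by (rule linearI) (simp_all add: matrix_add_ldistrib matrix_add_rdistrib scalar_matrix_assoc matrix_scalar_ac)

lemma linear_trace: "linear (trace :: real^'n^'n \<Rightarrow> real)"
  by (rule linearI) (simp_all add: trace_add trace_def sum_distrib_left)

lemma bounded_linear_trace: "bounded_linear (trace :: real^'n^'n \<Rightarrow> real)"
  using linear_conv_bounded_linear linear_trace by blast

lemma trace_scaleR: "trace (c *\<^sub>R (X::real^'n^'n)) = c * trace X"
  using linear_scale[OF linear_trace] by simp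

lemma transpose_add: "transpose ((X::real^'n^'m) + Y) = transpose X + transpose Y"
  by (simp add: transpose_def Finite_Cartesian_Product.vec_eq_iff)

lemma matrix_vector_mult_axis: "((X::real^'n^'m) *v axis i 1) $ a = X $ a $ i"
  by (simp add: matrix_vector_mult_def axis_def if_distrib cong: if_cong)

section \<open>Geometric decay of matrix powers\<close>

(* An enumeration g of the index type transports matrices to the JNF library, whose
   spectral-radius theory then bounds the powers. *)

definition jnf_mat :: "(nat \<Rightarrow> 'n::finite) \<Rightarrow> real^'n^'n \<Rightarrow> complex Matrix.mat" where
  "jnf_mat g X = Matrix.mat CARD('n) CARD('n) (\<lambda>(i, j). complex_of_real (X $ g i $ g j))"

definition jnf_vec :: "(nat \<Rightarrow> 'n::finite) \<Rightarrow> complex^'n \<Rightarrow> complex Matrix.vec" where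
  "jnf_vec g v = Matrix.vec CARD('n) (\<lambda>i. v $ g i)"

lemma jnf_mat_carrier: "jnf_mat g (X::real^'n::finite^'n) \<in> carrier_mat CARD('n) CARD('n)"
  by (simp add: jnf_mat_def)

lemma jnf_mat_index:
  "i < CARD('n::finite) \<Longrightarrow> j < CARD('n) \<Longrightarrow> jnf_mat g (X::real^'n^'n) $$ (i, j) = complex_of_real (X $ g i $ g j)"
  by (simp add: jnf_mat_def)

lemma dim_jnf_mat [simp]:
  "dim_row (jnf_mat g (X::real^'n::finite^'n)) = CARD('n)" "dim_col (jnf_mat g X) = CARD('n)"
  by (simp_all add: jnf_mat_def)

lemma dim_jnf_vec [simp]: "dim_vec (jnf_vec g (v::complex^'n::finite)) = CARD('n)"
  by (simp add: jnf_vec_def)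

lemma jnf_vec_index: "i < CARD('n::finite) \<Longrightarrow> Matrix.vec_index (jnf_vec g (v::complex^'n)) i = v $ g i"
  by (simp add: jnf_vec_def)

lemma jnf_vec_carrier: "jnf_vec g (v::complex^'n::finite) \<in> carrier_vec CARD('n)"
  by (simp add: jnf_vec_def)

lemma jnf_vec_smult: "jnf_vec g (c *s (v::complex^'n::finite)) = c \<cdot>\<^sub>v jnf_vec g v"
  by (auto simp: jnf_vec_def)

context
  fixes g :: "nat \<Rightarrow> 'n::finite"
  assumes g: "bij_betw g {0..<CARD('n)} UNIV"
begin

lemma sum_UNIV_reindex: "(\<Sum>k\<in>UNIV. h k) = (\<Sum>k<CARD('n). h (g k))"
  using sum.reindex_bij_betw[OF g, of h] by (simp add: atLeast0LessThan)

lemma surj_index: obtains i where "i < CARD('n)" "a = g i"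
  using g unfolding bij_betw_def by fastforce

lemma jnf_mat_mult: "jnf_mat g ((X::real^'n^'n) ** Y) = jnf_mat g X * jnf_mat g Y"
proof (rule eq_matI)
  fix i j assume "i < dim_row (jnf_mat g X * jnf_mat g Y)" "j < dim_col (jnf_mat g X * jnf_mat g Y)"
  then have i: "i < CARD('n)" and j: "j < CARD('n)" by (auto simp: jnf_mat_def)
  have "(jnf_mat g X * jnf_mat g Y) $$ (i, j) = (\<Sum>k<CARD('n). jnf_mat g X $$ (i, k) * jnf_mat g Y $$ (k, j))"
    using i j by (simp add: jnf_mat_def scalar_prod_def atLeast0LessThan)
  also have "\<dots> = complex_of_real (\<Sum>k\<in>UNIV. X $ g i $ k * Y $ k $ g j)"
    using i j by (simp add: sum_UNIV_reindex jnf_mat_index)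
  finally show "jnf_mat g (X ** Y) $$ (i, j) = (jnf_mat g X * jnf_mat g Y) $$ (i, j)"
    using i j by (simp add: jnf_mat_index matrix_matrix_mult_def)
qed (auto simp: jnf_mat_def)

lemma jnf_mat_one: "jnf_mat g (mat 1 :: real^'n^'n) = 1\<^sub>m CARD('n)"
proof (rule eq_matI)
  fix i j assume "i < dim_row (1\<^sub>m CARD('n))" "j < dim_col (1\<^sub>m CARD('n))"
  then have i: "i < CARD('n)" and j: "j < CARD('n)" by auto
  have "g i = g j \<longleftrightarrow> i = j" using g i j unfolding bij_betw_def inj_on_def by auto
  then show "jnf_mat g (mat 1 :: real^'n^'n) $$ (i, j) = 1\<^sub>m CARD('n) $$ (i, j)"
    using i j by (simp add: jnf_mat_index Finite_Cartesian_Product.mat_def)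
qed (auto simp: jnf_mat_def)

lemma jnf_mat_mpow: "jnf_mat g (mpow (X::real^'n^'n) k) = jnf_mat g X ^\<^sub>m k"
proof (induction k)
  case 0
  then show ?case by (simp add: jnf_mat_one)
next
  case (Suc k)
  then show ?case by (simp add: mpow_Suc_right jnf_mat_mult del: mpow.simps)
qed

lemma jnf_mat_mult_vec: "jnf_mat g (X::real^'n^'n) *\<^sub>v jnf_vec g v = jnf_vec g (cmat X *v v)"
proof (rule eq_vecI)
  fix i assume "i < dim_vec (jnf_vec g (cmat X *v v))"
  then have i: "i < CARD('n)" by (simp add: jnf_vec_def)
  have "Matrix.vec_index (jnf_mat g X *\<^sub>v jnf_vec g v) i
      = (\<Sum>k<CARD('n). jnf_mat g X $$ (i, k) * Matrix.vec_index (jnf_vec g v) k)"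
    using i by (simp add: jnf_mat_def jnf_vec_def scalar_prod_def atLeast0LessThan)
  also have "\<dots> = (\<Sum>k\<in>UNIV. complex_of_real (X $ g i $ k) * v $ k)"
    using i by (simp add: sum_UNIV_reindex jnf_mat_index jnf_vec_index)
  finally show "Matrix.vec_index (jnf_mat g X *\<^sub>v jnf_vec g v) i = Matrix.vec_index (jnf_vec g (cmat X *v v)) i"
    using i by (simp add: jnf_vec_index matrix_vector_mult_def cmat_def)
qed (auto simp: jnf_mat_def jnf_vec_def)

lemma jnf_vec_inj: "jnf_vec g v = jnf_vec g w \<longleftrightarrow> v = w"
proof
  assume eq: "jnf_vec g v = jnf_vec g w"
  show "v = w"
    unfolding Finite_Cartesian_Product.vec_eq_iff
  proof
    fix a
    obtain i where "i < CARD('n)" "a = g i" by (rule surj_index)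
    then show "v $ a = w $ a" using arg_cong[OF eq, of "\<lambda>x. Matrix.vec_index x i"] by (simp add: jnf_vec_index)
  qed
qed simp

lemma jnf_vec_surj:
  assumes "w \<in> carrier_vec CARD('n)"
  obtains v where "jnf_vec g v = w"
proof
  let ?f = "inv_into {0..<CARD('n)} g"
  have "i < CARD('n) \<Longrightarrow> ?f (g i) = i" for i
    using g unfolding bij_betw_def by (simp add: inv_into_f_f)
  then show "jnf_vec g (\<chi> a. Matrix.vec_index w (?f a)) = w"
    using assms by (auto simp: jnf_vec_def)
qed

lemma jnf_vec_eq_0_iff: "jnf_vec g v = 0\<^sub>v CARD('n) \<longleftrightarrow> v = 0"
proof -
  have "jnf_vec g 0 = 0\<^sub>v CARD('n)" by (auto simp: jnf_vec_def)
  then show ?thesis by (metis jnf_vec_inj)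
qed

lemma spectrum_jnf_mat: "Spectral_Radius.spectrum (jnf_mat g X) = eigenvalues_c X"
proof (intro Set.set_eqI iffI)
  fix c assume "c \<in> Spectral_Radius.spectrum (jnf_mat g X)"
  then obtain w where w: "w \<in> carrier_vec CARD('n)" "w \<noteq> 0\<^sub>v CARD('n)" "jnf_mat g X *\<^sub>v w = c \<cdot>\<^sub>v w"
    unfolding Spectral_Radius.spectrum_def eigenvalue_def eigenvector_def by (auto simp: jnf_mat_def)
  obtain v where v: "jnf_vec g v = w" using jnf_vec_surj[OF w(1)] .
  have "jnf_vec g (cmat X *v v) = jnf_vec g (c *s v)"
    using w(3) v by (simp add: jnf_mat_mult_vec[symmetric] jnf_vec_smult)
  then show "c \<in> eigenvalues_c X"
    using v w(2) unfolding eigenvalues_c_def by (auto simp: jnf_vec_inj jnf_vec_eq_0_iff)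
next
  fix c assume "c \<in> eigenvalues_c X"
  then obtain v where v: "v \<noteq> 0" "cmat X *v v = c *s v" unfolding eigenvalues_c_def by blast
  then have "jnf_mat g X *\<^sub>v jnf_vec g v = c \<cdot>\<^sub>v jnf_vec g v"
    by (simp add: jnf_mat_mult_vec jnf_vec_smult)
  with v(1) show "c \<in> Spectral_Radius.spectrum (jnf_mat g X)"
    unfolding Spectral_Radius.spectrum_def eigenvalue_def eigenvector_def
    by (intro CollectI exI[of _ "jnf_vec g v"]) (simp add: jnf_vec_eq_0_iff jnf_vec_carrier)
qed

end

lemma ex_bij_index: "\<exists>g::nat \<Rightarrow> 'n::finite. bij_betw g {0..<CARD('n)} UNIV"
  using ex_bij_betw_nat_finite[of "UNIV::'n set"] by auto

lemma eigenvalues_c_finite: "finite (eigenvalues_c (X::real^'n::finite^'n))"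
  using ex_bij_index card_finite_spectrum(1)[OF jnf_mat_carrier] spectrum_jnf_mat by metis

lemma eigenvalues_c_nonempty: "eigenvalues_c (X::real^'n::finite^'n) \<noteq> {}"
  using ex_bij_index spectrum_non_empty[OF jnf_mat_carrier] spectrum_jnf_mat by (metis zero_less_card_finite)

lemma spectral_radius_less_iff:
  "spectral_radius (X::real^'n::finite^'n) < r \<longleftrightarrow> (\<forall>z\<in>eigenvalues_c X. norm z < r)"
  unfolding Defs.spectral_radius_def by (simp add: Max_less_iff eigenvalues_c_finite eigenvalues_c_nonempty)

lemma mpow_bounded:
  fixes X :: "real^'n::finite^'n"
  assumes "spectral_radius X < 1"
  obtains c where "\<And>k a b. \<bar>mpow X k $ a $ b\<bar> \<le> c"
proof -
  obtain g :: "nat \<Rightarrow> 'n" where g: "bij_betw g {0..<CARD('n)} UNIV" using ex_bij_index by blast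
  have "Spectral_Radius.spectral_radius (jnf_mat g X) < 1"
    using assms unfolding Spectral_Radius.spectral_radius_def Defs.spectral_radius_def spectrum_jnf_mat[OF g] .
  from spectral_radius_jnf_norm_bound_less_1_upper_triangular[OF jnf_mat_carrier this]
  obtain c where c: "\<And>k. norm_bound (jnf_mat g X ^\<^sub>m k) c" by blast
  have "\<bar>mpow X k $ a $ b\<bar> \<le> c" for k a b
  proof -
    obtain i j where "i < CARD('n)" "a = g i" "j < CARD('n)" "b = g j"
      using surj_index[OF g] by metis
    moreover from this have "norm ((jnf_mat g X ^\<^sub>m k) $$ (i, j)) \<le> c"
      using c[of k] unfolding norm_bound_def by simp
    ultimately show ?thesis by (simp add: jnf_mat_mpow[OF g, symmetric] jnf_mat_index)
  qed
  then show ?thesis by (rule that)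
qed

lemma cmat_scaleR_mult_vec: "cmat (r *\<^sub>R X) *v v = complex_of_real r *s (cmat X *v v)"
  by (simp add: Finite_Cartesian_Product.vec_eq_iff cmat_def matrix_vector_mult_def sum_distrib_left mult.assoc)

lemma eigenvalues_c_scaleR: "z \<in> eigenvalues_c X \<Longrightarrow> complex_of_real r * z \<in> eigenvalues_c (r *\<^sub>R X)"
  by (auto simp: eigenvalues_c_def cmat_scaleR_mult_vec vector_smult_assoc)

lemma mpow_geometric_decay:
  fixes X :: "real^'n::finite^'n"
  assumes "spectral_radius X < 1"
  obtains c r where "0 < r" "r < 1" "\<And>k a b. \<bar>mpow X k $ a $ b\<bar> \<le> c * r ^ k"
proof -
  \<comment> \<open>powers of \<open>X\<close> are \<open>r ^ k\<close> times the bounded powers of \<open>X / r\<close>\<close>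
  define r where "r = (1 + max (spectral_radius X) 0) / 2"
  have r: "0 < r" "r < 1" "spectral_radius X < r" using assms unfolding r_def by auto
  have X: "X = r *\<^sub>R ((1 / r) *\<^sub>R X)" using r by simp
  have "norm z < 1" if "z \<in> eigenvalues_c ((1 / r) *\<^sub>R X)" for z
  proof -
    have "complex_of_real r * z \<in> eigenvalues_c X" using eigenvalues_c_scaleR[OF that, of r] X by simp
    then have "norm (complex_of_real r * z) < r" using r(3) spectral_radius_less_iff by blast
    then show ?thesis using r(1) by (simp add: norm_mult)
  qed
  then obtain c where c: "\<And>k a b. \<bar>mpow ((1 / r) *\<^sub>R X) k $ a $ b\<bar> \<le> c"
    using mpow_bounded spectral_radius_less_iff by blast
  have "\<bar>mpow X k $ a $ b\<bar> \<le> c * r ^ k" for k a b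
  proof -
    have "mpow X k = r ^ k *\<^sub>R mpow ((1 / r) *\<^sub>R X) k"
      using mpow_scaleR[of r "(1 / r) *\<^sub>R X" k] X by simp
    then show ?thesis
      using mult_left_mono[OF c[of k a b], of "r ^ k"] r(1) by (simp add: abs_mult mult.commute)
  qed
  with r show ?thesis by (intro that)
qed

section \<open>Quadratic forms and positive definiteness\<close>

definition quad_form :: "real^'n^'n \<Rightarrow> real^'n \<Rightarrow> real" where
  "quad_form X x = x \<bullet> (X *v x)"

lemma quad_form_sandwich: "quad_form (U ** X ** transpose U) x = quad_form X (transpose U *v x)"
  unfolding quad_form_def
  by (metis dot_lmul_matrix matrix_vector_mul_assoc transpose_matrix_vector)

lemma quad_form_diff: "quad_form (X - Y) x = quad_form X x - quad_form Y x"
  by (simp add: quad_form_def matrix_vector_mult_diff_rdistrib inner_diff_right)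

lemma quad_form_zero_vec [simp]: "quad_form X 0 = 0"
  by (simp add: quad_form_def)

lemma linear_quad_form: "linear (\<lambda>X. quad_form X x)"
  by (rule linearI)
    (simp_all add: quad_form_def matrix_vector_mult_add_rdistrib inner_add_right scaleR_matrix_vector_assoc[symmetric])

lemma trace_eq_sum_quad_form: "trace X = (\<Sum>i\<in>UNIV. quad_form X (axis i 1))"
  by (simp add: trace_def quad_form_def matrix_vector_mult_axis inner_axis')

lemma pos_def_quad_form_nonneg: "pos_def X \<Longrightarrow> 0 \<le> quad_form X x"
  unfolding pos_def_def quad_form_def by (cases "x = 0") (auto intro: less_imp_le)

lemma pos_def_quad_form_pos: "pos_def X \<Longrightarrow> x \<noteq> 0 \<Longrightarrow> 0 < quad_form X x"
  unfolding pos_def_def quad_form_def by auto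

lemma pos_def_imp_pos_semidef: "pos_def X \<Longrightarrow> pos_semidef X"
  using pos_def_quad_form_nonneg by (auto simp: pos_def_def pos_semidef_def quad_form_def)

lemma pos_semidef_quad_form_nonneg: "pos_semidef X \<Longrightarrow> 0 \<le> quad_form X x"
  unfolding pos_semidef_def quad_form_def by simp

lemma pos_def_sandwich_add:
  fixes U :: "real^'n^'m"
  assumes X: "pos_semidef X" and R: "pos_def R"
  shows "pos_def (U ** X ** transpose U + R)"
  unfolding pos_def_def
proof (intro conjI allI impI)
  show "transpose (U ** X ** transpose U + R) = U ** X ** transpose U + R"
    using X R by (simp add: pos_def_def pos_semidef_def transpose_add matrix_transpose_mul matrix_mul_assoc)
  fix x :: "real^'m" assume "x \<noteq> 0"
  then have "0 < quad_form (U ** X ** transpose U) x + quad_form R x"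
    using pos_semidef_quad_form_nonneg[OF X] pos_def_quad_form_pos[OF R] by (simp add: quad_form_sandwich add_nonneg_pos)
  then show "0 < x \<bullet> ((U ** X ** transpose U + R) *v x)"
    by (simp add: quad_form_def matrix_vector_mult_add_rdistrib inner_add_right)
qed

lemma pos_def_invertible:
  assumes "pos_def S"
  shows "invertible S"
proof -
  have "S *v x = 0 \<Longrightarrow> x = 0" for x
    using pos_def_quad_form_pos[OF assms, of x] by (auto simp: quad_form_def)
  then show ?thesis by (simp add: invertible_left_inverse matrix_left_invertible_ker)
qed

lemma matrix_inv_right: "invertible S \<Longrightarrow> S ** matrix_inv S = mat 1"
  unfolding invertible_def matrix_inv_def by (rule someI2_ex) auto

lemma quad_form_matrix_inv_pos:
  assumes S: "pos_def S" and "y \<noteq> 0"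
  shows "0 < quad_form (matrix_inv S) y"
proof -
  define z where "z = matrix_inv S *v y"
  have y: "S *v z = y"
    by (simp add: z_def matrix_vector_mul_assoc matrix_inv_right[OF pos_def_invertible[OF S]])
  then have "z \<noteq> 0" using \<open>y \<noteq> 0\<close> by auto
  have "quad_form (matrix_inv S) y = y \<bullet> z" by (simp add: quad_form_def z_def)
  also have "\<dots> = z \<bullet> (S *v z)" by (simp add: y[symmetric] inner_commute)
  finally show ?thesis
    using pos_def_quad_form_pos[OF S \<open>z \<noteq> 0\<close>] by (simp add: quad_form_def)
qed

lemma quad_form_matrix_inv_nonneg: "pos_def S \<Longrightarrow> 0 \<le> quad_form (matrix_inv S) y"
  by (cases "y = 0") (auto intro: less_imp_le quad_form_matrix_inv_pos)

section \<open>The Lyapunov series\<close>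

definition lyap_term :: "real^'n^'n \<Rightarrow> real^'n^'n \<Rightarrow> nat \<Rightarrow> real^'n^'n" where
  "lyap_term A Y j = mpow A j ** Y ** transpose (mpow A j)"

definition lyap_step :: "real^'n^'n \<Rightarrow> real^'n^'n \<Rightarrow> real^'n^'n \<Rightarrow> real^'n^'n" where
  "lyap_step A Q Y = A ** Y ** transpose A + Q"

lemma abs_entry_le_norm: "\<bar>(X::real^'n^'m) $ a $ b\<bar> \<le> norm X"
  using component_le_norm_cart[of "X $ a" b] Finite_Cartesian_Product.norm_nth_le[of X a] by linarith

lemma norm_le_sum_abs_entries: "norm (X::real^'n^'m) \<le> (\<Sum>a\<in>UNIV. \<Sum>b\<in>UNIV. \<bar>X $ a $ b\<bar>)"
proof -
  have "norm X \<le> (\<Sum>a\<in>UNIV. norm (X $ a))"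
    unfolding norm_vec_def by (rule L2_set_le_sum) simp
  also have "\<dots> \<le> (\<Sum>a\<in>UNIV. \<Sum>b\<in>UNIV. \<bar>X $ a $ b\<bar>)"
    by (intro sum_mono norm_le_l1_cart)
  finally show ?thesis .
qed

lemma abs_entry_sandwich_le:
  fixes U X V :: "real^'n^'n"
  assumes U: "\<And>a b. \<bar>U $ a $ b\<bar> \<le> e" and V: "\<And>a b. \<bar>V $ a $ b\<bar> \<le> e"
  shows "\<bar>(U ** X ** V) $ a $ b\<bar> \<le> real CARD('n) ^ 2 * e\<^sup>2 * norm X"
proof -
  have e: "0 \<le> e" using U[of a a] by linarith
  have "\<bar>(U ** X ** V) $ a $ b\<bar> = \<bar>\<Sum>d\<in>UNIV. (\<Sum>c\<in>UNIV. U $ a $ c * X $ c $ d) * V $ d $ b\<bar>"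
    by (simp add: matrix_matrix_mult_def)
  also have "\<dots> \<le> (\<Sum>d\<in>UNIV. \<Sum>c\<in>UNIV. \<bar>U $ a $ c\<bar> * \<bar>X $ c $ d\<bar> * \<bar>V $ d $ b\<bar>)"
    by (rule order_trans[OF sum_abs])
      (auto simp: abs_mult sum_distrib_right intro!: sum_mono order_trans[OF sum_abs])
  also have "\<dots> \<le> (\<Sum>d\<in>(UNIV::'n set). \<Sum>c\<in>(UNIV::'n set). e * norm X * e)"
    by (intro sum_mono mult_mono abs_entry_le_norm U V) (auto simp: e)
  also have "\<dots> = real CARD('n) ^ 2 * e\<^sup>2 * norm X"
    by (simp add: power2_eq_square mult_ac)
  finally show ?thesis .
qed

lemma summable_norm_lyap_term:
  fixes A :: "real^'n^'n"
  assumes "spectral_radius A < 1"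
  shows "summable (\<lambda>j. norm (lyap_term A Y j))"
proof -
  obtain c r where r: "0 < r" "r < 1" and c: "\<And>k a b. \<bar>mpow A k $ a $ b\<bar> \<le> c * r ^ k"
    using mpow_geometric_decay[OF assms] by metis
  define K where "K = real CARD('n) ^ 4 * c\<^sup>2 * norm Y"
  have bound: "norm (lyap_term A Y j) \<le> K * (r\<^sup>2) ^ j" for j
  proof -
    have "\<bar>lyap_term A Y j $ a $ b\<bar> \<le> real CARD('n) ^ 2 * (c * r ^ j)\<^sup>2 * norm Y" for a b
      unfolding lyap_term_def by (rule abs_entry_sandwich_le) (auto simp: c transpose_def)
    then have "norm (lyap_term A Y j)
        \<le> (\<Sum>a\<in>(UNIV::'n set). \<Sum>b\<in>(UNIV::'n set). real CARD('n) ^ 2 * (c * r ^ j)\<^sup>2 * norm Y)"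
      by (intro order_trans[OF norm_le_sum_abs_entries] sum_mono)
    also have "\<dots> = K * (r\<^sup>2) ^ j"
      by (simp add: K_def power_mult_distrib power_numeral_reduce)
    finally show ?thesis .
  qed
  have "summable (\<lambda>j. K * (r\<^sup>2) ^ j)"
    using r by (intro summable_mult summable_geometric) (simp add: abs_square_less_1)
  then show ?thesis by (rule summable_comparison_test') (simp add: bound)
qed

lemma summable_lyap_term: "spectral_radius A < 1 \<Longrightarrow> summable (lyap_term A Y)"
  by (rule summable_norm_cancel[OF summable_norm_lyap_term])

lemma lyap_term_tendsto_0: "spectral_radius A < 1 \<Longrightarrow> lyap_term A Y \<longlonglongrightarrow> 0"
  using summable_LIMSEQ_zero[OF summable_lyap_term] .

lemma lyap_term_0 [simp]: "lyap_term A Y 0 = Y"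
  by (simp add: lyap_term_def)

lemma lyap_term_Suc: "lyap_term A Y (Suc j) = A ** lyap_term A Y j ** transpose A"
  by (simp add: lyap_term_def matrix_transpose_mul matrix_mul_assoc)

lemma quad_form_lyap_term: "quad_form (lyap_term A Y j) x = quad_form Y (transpose (mpow A j) *v x)"
  unfolding lyap_term_def by (rule quad_form_sandwich)

lemma Lyap_fixpoint:
  assumes "spectral_radius A < 1"
  shows "lyap_step A Q (Lyap A Q) = Lyap A Q"
proof -
  have Lyap: "Lyap A Q = (\<Sum>j. lyap_term A Q j)" by (simp add: Lyap_def lyap_term_def)
  have "(\<Sum>j. lyap_term A Q (Suc j)) = Lyap A Q - Q"
    using suminf_split_head[OF summable_lyap_term[OF assms]] by (simp add: Lyap)
  moreover have "(\<Sum>j. lyap_term A Q (Suc j)) = A ** Lyap A Q ** transpose A"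
    unfolding lyap_term_Suc Lyap
    by (rule bounded_linear.suminf[OF linear_matrix_sandwich[THEN linear_conv_bounded_linear[THEN iffD1]]
          summable_lyap_term[OF assms], symmetric])
  ultimately show ?thesis by (simp add: lyap_step_def)
qed

lemma funpow_lyap_step:
  assumes "spectral_radius A < 1"
  shows "(lyap_step A Q ^^ j) X = Lyap A Q + lyap_term A (X - Lyap A Q) j"
proof (induction j)
  case 0
  then show ?case by simp
next
  case (Suc j)
  have "(lyap_step A Q ^^ Suc j) X = lyap_step A Q (Lyap A Q) + A ** lyap_term A (X - Lyap A Q) j ** transpose A"
    by (simp add: Suc lyap_step_def matrix_add_ldistrib matrix_add_rdistrib)
  then show ?case by (simp add: Lyap_fixpoint[OF assms] lyap_term_Suc)
qed

lemma lyap_step_iterates_tendsto: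
  assumes "spectral_radius A < 1"
  shows "(\<lambda>j. (lyap_step A Q ^^ j) X) \<longlonglongrightarrow> Lyap A Q"
  using tendsto_add[OF tendsto_const lyap_term_tendsto_0[OF assms]]
  by (simp add: funpow_lyap_step[OF assms])

lemma pos_def_lyap_step: "pos_semidef P \<Longrightarrow> pos_def Q \<Longrightarrow> pos_def (lyap_step A Q P)"
  unfolding lyap_step_def by (rule pos_def_sandwich_add)

lemma lyap_step_diff: "lyap_step A Q X - lyap_step A Q Y = A ** (X - Y) ** transpose A"
  by (simp add: lyap_step_def linear_diff[OF linear_matrix_sandwich])

lemma trace_lyap_step_iterates_le:
  assumes A: "spectral_radius A < 1" and X: "\<And>x. quad_form (X - Lyap A Q) x \<le> 0"
  shows "trace ((lyap_step A Q ^^ j) X) \<le> trace (Lyap A Q)"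
proof -
  have "trace (lyap_term A (X - Lyap A Q) j) \<le> 0"
    unfolding trace_eq_sum_quad_form by (intro sum_nonpos) (simp add: quad_form_lyap_term X)
  then show ?thesis by (simp add: funpow_lyap_step[OF A] trace_add)
qed

section \<open>The Riccati fixpoint lies below the open-loop covariance\<close>

definition riccati_gain :: "real^'n^'n \<Rightarrow> real^'n^'m \<Rightarrow> real^'m^'m \<Rightarrow> real^'n^'n" where
  "riccati_gain M C R = M ** transpose C ** matrix_inv (C ** M ** transpose C + R) ** C ** M"

lemma riccati_eq_lyap_step_minus_gain:
  "riccati A C Q R P = lyap_step A Q P - riccati_gain (lyap_step A Q P) C R"
  by (simp add: riccati_def riccati_gain_def lyap_step_def Let_def)

lemma quad_form_riccati_gain:
  assumes "transpose M = M"
  shows "quad_form (riccati_gain M C R) x = quad_form (matrix_inv (C ** M ** transpose C + R)) ((C ** M) *v x)"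
proof -
  define U where "U = M ** transpose C"
  have U: "transpose U = C ** M" by (simp add: U_def matrix_transpose_mul assms)
  have "riccati_gain M C R = U ** matrix_inv (C ** M ** transpose C + R) ** transpose U"
    unfolding riccati_gain_def U by (simp add: U_def matrix_mul_assoc)
  then have "quad_form (riccati_gain M C R) x
      = quad_form (matrix_inv (C ** M ** transpose C + R)) (transpose U *v x)"
    by (simp only: quad_form_sandwich)
  then show ?thesis by (simp only: U)
qed

lemma quad_form_riccati_gain_nonneg:
  assumes "pos_semidef M" "pos_def R"
  shows "0 \<le> quad_form (riccati_gain M C R) x"
proof -
  have "pos_def (C ** M ** transpose C + R)" by (rule pos_def_sandwich_add[OF assms])
  then show ?thesis
    using assms(1) by (simp add: quad_form_riccati_gain pos_semidef_def quad_form_matrix_inv_nonneg)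
qed

lemma trace_riccati_gain_pos:
  assumes M: "pos_def M" and R: "pos_def R" and "C \<noteq> 0"
  shows "0 < trace (riccati_gain M C R)"
proof -
  let ?S = "C ** M ** transpose C + R"
  have S: "pos_def ?S" using pos_def_sandwich_add[OF pos_def_imp_pos_semidef[OF M] R] .
  have MT: "transpose M = M" using M by (simp add: pos_def_def)
  have "C ** M \<noteq> 0"
  proof
    assume "C ** M = 0"
    then have "C ** (M ** matrix_inv M) = 0" by (simp add: matrix_mul_assoc)
    with \<open>C \<noteq> 0\<close> show False by (simp add: matrix_inv_right[OF pos_def_invertible[OF M]])
  qed
  have "\<exists>i. (C ** M) *v axis i 1 \<noteq> 0"
  proof (rule ccontr)
    assume "\<not> ?thesis"
    then have "(C ** M) $ a $ i = 0" for a i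
      by (metis matrix_vector_mult_axis zero_index)
    then have "C ** M = 0" by (simp add: Finite_Cartesian_Product.vec_eq_iff)
    with \<open>C ** M \<noteq> 0\<close> show False by contradiction
  qed
  then obtain i where i: "(C ** M) *v axis i 1 \<noteq> 0" by blast
  have "0 < quad_form (riccati_gain M C R) (axis i 1)"
    using quad_form_matrix_inv_pos[OF S i] by (simp add: quad_form_riccati_gain[OF MT])
  moreover have "0 \<le> quad_form (riccati_gain M C R) (axis j 1)" for j
    by (rule quad_form_riccati_gain_nonneg[OF pos_def_imp_pos_semidef[OF M] R])
  ultimately show ?thesis
    unfolding trace_eq_sum_quad_form by (intro sum_pos2[where i = i]) auto
qed

lemma observable_imp_nonzero:
  fixes C :: "real^'n^'m"
  assumes "observable A C"
  shows "C \<noteq> 0"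
proof
  assume "C = 0"
  with assms have "\<forall>x::real^'n. x = 0" by (simp add: observable_def)
  then have "(axis undefined 1 :: real^'n) = 0" by blast
  then show False by (simp add: axis_eq_0_iff)
qed

lemma quad_form_le_of_lyap_inequality:
  assumes A: "spectral_radius A < 1"
    and D: "D = A ** D ** transpose A - K" and K: "\<And>x. 0 \<le> quad_form K x"
  shows "quad_form D x \<le> - quad_form K x"
proof -
  have step: "quad_form D y = quad_form D (transpose A *v y) - quad_form K y" for y
    by (subst D) (simp add: quad_form_diff quad_form_sandwich)
  have iter: "quad_form D y \<le> quad_form (lyap_term A D j) y" for j y
  proof (induction j)
    case (Suc j)
    have "transpose (mpow A (Suc j)) *v y = transpose A *v (transpose (mpow A j) *v y)"
      by (simp only: mpow_Suc_right matrix_transpose_mul matrix_vector_mul_assoc)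
    then show ?case
      using Suc step[of "transpose (mpow A j) *v y"] K[of "transpose (mpow A j) *v y"]
      by (simp add: quad_form_lyap_term)
  qed simp
  have "(\<lambda>j. quad_form (lyap_term A D j) y) \<longlonglongrightarrow> quad_form 0 y" for y
    using linear_quad_form[THEN linear_conv_bounded_linear[THEN iffD1]]
    by (rule bounded_linear.tendsto) (rule lyap_term_tendsto_0[OF A])
  then have "quad_form D y \<le> quad_form 0 y" for y
    by (rule LIMSEQ_le_const) (auto simp: iter)
  then have "quad_form D y \<le> 0" for y by (simp add: quad_form_def)
  from this[of "transpose A *v x"] show ?thesis using step[of x] by linarith
qed

lemma riccati_fixpoint_below_Lyap:
  assumes A: "spectral_radius A < 1" and Q: "pos_def Q" and R: "pos_def R"
    and P: "pos_semidef P" and ric: "P = riccati A C Q R P" and C: "C \<noteq> 0"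
  shows "quad_form (P - Lyap A Q) x \<le> 0" and "trace P < trace (Lyap A Q)"
proof -
  define M where "M = lyap_step A Q P"
  define K where "K = riccati_gain M C R"
  have M: "pos_def M" unfolding M_def by (rule pos_def_lyap_step[OF P Q])
  have K: "0 \<le> quad_form K y" for y
    unfolding K_def by (rule quad_form_riccati_gain_nonneg[OF pos_def_imp_pos_semidef[OF M] R])
  have P_eq: "P = M - K"
    using ric unfolding riccati_eq_lyap_step_minus_gain M_def[symmetric] K_def[symmetric] .
  have "P - Lyap A Q = (M - lyap_step A Q (Lyap A Q)) - K"
    using P_eq Lyap_fixpoint[OF A] by (simp add: algebra_simps)
  also have "M - lyap_step A Q (Lyap A Q) = A ** (P - Lyap A Q) ** transpose A"
    unfolding M_def by (rule lyap_step_diff)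
  finally have D: "P - Lyap A Q = A ** (P - Lyap A Q) ** transpose A - K" .
  have le: "quad_form (P - Lyap A Q) y \<le> - quad_form K y" for y
    by (rule quad_form_le_of_lyap_inequality[OF A D K])
  show "quad_form (P - Lyap A Q) x \<le> 0" using le[of x] K[of x] by linarith
  have "trace (P - Lyap A Q) \<le> - trace K"
    unfolding trace_eq_sum_quad_form by (simp add: sum_negf[symmetric] sum_mono le)
  then show "trace P < trace (Lyap A Q)"
    using trace_riccati_gain_pos[OF M R C] by (simp add: K_def trace_sub)
qed

section \<open>Resets\<close>

lemma Pseq_reset: "lam k \<omega> \<Longrightarrow> u k \<omega> \<Longrightarrow> 0 < k \<Longrightarrow> Pseq A Q Pbar P0 lam u k \<omega> = Pbar"
  by (cases k) simp_all

lemma Pseq_no_reset: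
  assumes "\<And>i. t < i \<Longrightarrow> i \<le> t + j \<Longrightarrow> \<not> (lam i \<omega> \<and> u i \<omega>)"
  shows "Pseq A Q Pbar P0 lam u (t + j) \<omega> = (lyap_step A Q ^^ j) (Pseq A Q Pbar P0 lam u t \<omega>)"
  using assms by (induction j) (auto simp: lyap_step_def)

text \<open>The most recent reset up to time \<open>k\<close> happened at time \<open>k - j\<close>; when \<open>j = k\<close> there
  was none in \<open>{1..k}\<close> and the initial value is still propagating (time \<open>0\<close> is never
  inspected, hence the \<open>max 1\<close>).\<close>

definition last_reset_event :: "'a measure \<Rightarrow> (nat \<Rightarrow> 'a \<Rightarrow> bool) \<Rightarrow> nat \<Rightarrow> nat \<Rightarrow> 'a set" where
  "last_reset_event M b k j = {\<omega> \<in> space M. \<forall>i\<in>{max 1 (k - j)..k}. b i \<omega> = (i = k - j)}"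

lemma last_reset_event_cover:
  assumes "\<omega> \<in> space M"
  obtains j where "j \<le> k" "\<omega> \<in> last_reset_event M b k j"
proof (cases "\<exists>i\<in>{1..k}. b i \<omega>")
  case True
  define S where "S = {i\<in>{1..k}. b i \<omega>}"
  define t where "t = Max S"
  have S: "finite S" "S \<noteq> {}" using True by (auto simp: S_def)
  have t: "t \<in> {1..k}" "b t \<omega>" using Max_in[OF S] by (auto simp: t_def S_def)
  have t_max: "i \<le> t" if "i \<in> {1..k}" "b i \<omega>" for i
    using Max_ge[OF S(1)] that by (auto simp: t_def S_def)
  have "b i \<omega> = (i = t)" if "i \<in> {t..k}" for i
    using t t_max[of i] that by (cases "i = t") auto
  moreover have "k - (k - t) = t" "max 1 t = t" using t(1) by auto
  ultimately have "\<omega> \<in> last_reset_event M b k (k - t)"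
    using assms by (simp add: last_reset_event_def)
  with t show ?thesis by (intro that[of "k - t"]) auto
next
  case False
  then have "\<omega> \<in> last_reset_event M b k k" using assms by (auto simp: last_reset_event_def)
  then show ?thesis by (rule that[OF order_refl])
qed

lemma disjoint_last_reset_events: "disjoint_family_on (last_reset_event M b k) {..k}"
proof -
  have "last_reset_event M b k j \<inter> last_reset_event M b k j' = {}" if "j < j'" "j' \<le> k" for j j'
    using that by (auto simp: last_reset_event_def dest!: bspec[of _ _ "k - j"])
  then show ?thesis
    unfolding disjoint_family_on_def by (metis Int_commute atMost_iff linorder_neqE_nat)
qed

lemma Pseq_on_last_reset_event:
  assumes "\<omega> \<in> last_reset_event M (\<lambda>i \<omega>. lam i \<omega> \<and> u i \<omega>) k j" "j \<le> k"
  shows "Pseq A Q Pbar P0 lam u k \<omega> = (lyap_step A Q ^^ j) (if j < k then Pbar else P0)"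
proof -
  have no_reset: "\<not> (lam i \<omega> \<and> u i \<omega>)" if "k - j < i" "i \<le> k - j + j" for i
    using assms that by (auto simp: last_reset_event_def)
  have "Pseq A Q Pbar P0 lam u (k - j) \<omega> = (if j < k then Pbar else P0)"
  proof (cases "j < k")
    case True
    then have "lam (k - j) \<omega> \<and> u (k - j) \<omega>"
      using assms(1) unfolding last_reset_event_def by (auto dest!: bspec[of _ _ "k - j"])
    with True show ?thesis by (simp add: Pseq_reset)
  next
    case False
    with assms(2) show ?thesis by simp
  qed
  moreover have "Pseq A Q Pbar P0 lam u (k - j + j) \<omega> = (lyap_step A Q ^^ j) (Pseq A Q Pbar P0 lam u (k - j) \<omega>)"
    by (rule Pseq_no_reset) (rule no_reset)
  ultimately show ?thesis using assms(2) by simp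
qed

context prob_space
begin

lemma expectation_eq_sum_partition:
  fixes f :: "'a \<Rightarrow> 'b::{banach, second_countable_topology}"
  assumes I: "finite I" and E: "\<And>i. i \<in> I \<Longrightarrow> E i \<in> events" "disjoint_family_on E I"
    and cover: "\<And>\<omega>. \<omega> \<in> space M \<Longrightarrow> \<exists>i\<in>I. \<omega> \<in> E i"
    and f: "\<And>i \<omega>. i \<in> I \<Longrightarrow> \<omega> \<in> E i \<Longrightarrow> f \<omega> = v i"
  shows "expectation f = (\<Sum>i\<in>I. prob (E i) *\<^sub>R v i)"
proof -
  have "f \<omega> = (\<Sum>i\<in>I. indicator (E i) \<omega> *\<^sub>R v i)" if \<omega>: "\<omega> \<in> space M" for \<omega>
  proof -
    obtain i where i: "i \<in> I" "\<omega> \<in> E i" using cover[OF \<omega>] by blast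
    have "\<omega> \<notin> E i'" if "i' \<in> I - {i}" for i'
      using E(2) i that unfolding disjoint_family_on_def by blast
    then have "(\<Sum>i'\<in>I - {i}. indicator (E i') \<omega> *\<^sub>R v i') = 0"
      by (intro sum.neutral) simp
    then have "(\<Sum>i\<in>I. indicator (E i) \<omega> *\<^sub>R v i) = v i"
      using i unfolding sum.remove[OF I i(1)] by simp
    with f i show ?thesis by simp
  qed
  then have "expectation f = expectation (\<lambda>\<omega>. \<Sum>i\<in>I. indicator (E i) \<omega> *\<^sub>R v i)"
    by (rule Bochner_Integration.integral_cong[OF refl])
  also have "\<dots> = (\<Sum>i\<in>I. expectation (\<lambda>\<omega>. indicator (E i) \<omega> *\<^sub>R v i))"
    using E(1) by (intro Bochner_Integration.integral_sum integrable_scaleR_left)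
      (simp add: integrable_indicator_iff less_top[symmetric])
  also have "\<dots> = (\<Sum>i\<in>I. prob (E i) *\<^sub>R v i)"
    using E(1)
    by (intro sum.cong refl) (simp add: Int_absorb2 sets.sets_into_space integrable_indicator_iff less_top[symmetric])
  finally show ?thesis .
qed

lemma prob_Collect_not:
  assumes "W \<in> M \<rightarrow>\<^sub>M count_space UNIV"
  shows "prob {\<omega> \<in> space M. \<not> W \<omega>} = 1 - prob {\<omega> \<in> space M. W \<omega>}"
proof -
  have "{\<omega> \<in> space M. W \<omega>} \<in> events" using assms by measurable
  moreover have "{\<omega> \<in> space M. \<not> W \<omega>} = space M - {\<omega> \<in> space M. W \<omega>}" by auto
  ultimately show ?thesis by (simp add: prob_compl)
qed

lemma Collect_eq_const_in_events:
  assumes "W \<in> M \<rightarrow>\<^sub>M count_space UNIV"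
  shows "{\<omega> \<in> space M. W \<omega> = c} \<in> events"
  using assms by measurable

lemma prob_indep_pattern:
  fixes b :: "'i \<Rightarrow> 'a \<Rightarrow> bool"
  assumes indep: "indep_vars (\<lambda>_. count_space UNIV) b I" and J: "finite J" "J \<subseteq> I"
  shows "prob {\<omega> \<in> space M. \<forall>i\<in>J. b i \<omega> = v i} = (\<Prod>i\<in>J. prob {\<omega> \<in> space M. b i \<omega> = v i})"
proof (cases "J = {}")
  case True
  then show ?thesis by (simp add: prob_space)
next
  case False
  have "prob (\<Inter>i\<in>J. b i -` {v i} \<inter> space M) = (\<Prod>i\<in>J. prob (b i -` {v i} \<inter> space M))"
    using indep False J by (rule indep_varsD) simp
  moreover have "(\<Inter>i\<in>J. b i -` {v i} \<inter> space M) = {\<omega> \<in> space M. \<forall>i\<in>J. b i \<omega> = v i}"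
    using False by auto
  ultimately show ?thesis by (simp add: vimage_def Int_def conj_commute)
qed

lemma indep_vars_conj:
  fixes X Y :: "'i \<Rightarrow> 'a \<Rightarrow> bool"
  assumes "indep_vars (\<lambda>_. count_space UNIV)
             (\<lambda>i \<omega>. case i of Inl k \<Rightarrow> X k \<omega> | Inr k \<Rightarrow> Y k \<omega>) (Inl ` I \<union> Inr ` I)"
  shows "indep_vars (\<lambda>_. count_space UNIV) (\<lambda>i \<omega>. X i \<omega> \<and> Y i \<omega>) I"
proof -
  define Z where "Z = (\<lambda>i \<omega>. case i of Inl k \<Rightarrow> X k \<omega> | Inr k \<Rightarrow> Y k \<omega>)"
  define K where "K = (\<lambda>j::'i. {Inl j, Inr j :: 'i + 'i})"
  have "indep_vars (\<lambda>j. PiM (K j) (\<lambda>_. count_space UNIV)) (\<lambda>j \<omega>. restrict (\<lambda>i. Z i \<omega>) (K j)) I"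
    using assms unfolding Z_def[symmetric]
    by (rule indep_vars_restrict) (auto simp: K_def disjoint_family_on_def)
  moreover have "(\<lambda>h. h (Inl j) \<and> h (Inr j)) \<in> PiM (K j) (\<lambda>_. count_space UNIV) \<rightarrow>\<^sub>M count_space UNIV" for j
    unfolding K_def by measurable
  ultimately have "indep_vars (\<lambda>_. count_space UNIV)
      (\<lambda>j \<omega>. (\<lambda>h. h (Inl j) \<and> h (Inr j)) (restrict (\<lambda>i. Z i \<omega>) (K j))) I"
    by (rule indep_vars_compose2)
  then show ?thesis
    by (rule indep_vars_cong[THEN iffD1, rotated -1]) (auto simp: K_def Z_def)
qed

lemma prob_conj_indep:
  assumes indep: "indep_vars (\<lambda>_. count_space UNIV)
             (\<lambda>i \<omega>. case i of Inl k \<Rightarrow> X k \<omega> | Inr k \<Rightarrow> Y k \<omega>) (Inl ` I \<union> Inr ` I)"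
    and "i \<in> I"
  shows "prob {\<omega> \<in> space M. X i \<omega> \<and> Y i \<omega>}
    = (1 - prob {\<omega> \<in> space M. \<not> X i \<omega>}) * (1 - prob {\<omega> \<in> space M. \<not> Y i \<omega>})"
proof -
  let ?Z = "\<lambda>i \<omega>. case i of Inl k \<Rightarrow> X k \<omega> | Inr k \<Rightarrow> Y k \<omega>"
  have Z: "?Z l \<in> M \<rightarrow>\<^sub>M count_space UNIV" if "l \<in> Inl ` I \<union> Inr ` I" for l
    using indep that unfolding indep_vars_def by blast
  have X: "X i \<in> M \<rightarrow>\<^sub>M count_space UNIV" using Z[of "Inl i"] \<open>i \<in> I\<close> by simp
  have Y: "Y i \<in> M \<rightarrow>\<^sub>M count_space UNIV" using Z[of "Inr i"] \<open>i \<in> I\<close> by simp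
  have "prob {\<omega> \<in> space M. \<forall>l\<in>{Inl i, Inr i}. ?Z l \<omega> = True}
      = (\<Prod>l\<in>{Inl i, Inr i}. prob {\<omega> \<in> space M. ?Z l \<omega> = True})"
    using assms by (intro prob_indep_pattern) auto
  then show ?thesis using prob_Collect_not[OF X] prob_Collect_not[OF Y] by simp
qed

lemma last_reset_event_in_events:
  assumes "\<And>i. 1 \<le> i \<Longrightarrow> b i \<in> M \<rightarrow>\<^sub>M count_space UNIV"
  shows "last_reset_event M b k j \<in> events"
  unfolding last_reset_event_def
  by (intro sets.sets_Collect_countable_All' Collect_eq_const_in_events assms) auto

lemma prob_last_reset_event:
  assumes indep: "indep_vars (\<lambda>_. count_space UNIV) b {1..}"
    and p: "\<And>i. 1 \<le> i \<Longrightarrow> prob {\<omega> \<in> space M. b i \<omega>} = p" and "j \<le> k"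
  shows "prob (last_reset_event M b k j) = (if j < k then p else 1) * (1 - p) ^ j"
proof -
  define J where "J = {max 1 (k - j)..k}"
  have meas: "b i \<in> M \<rightarrow>\<^sub>M count_space UNIV" if "1 \<le> i" for i
    using indep that unfolding indep_vars_def by auto
  have "prob (last_reset_event M b k j) = (\<Prod>i\<in>J. prob {\<omega> \<in> space M. b i \<omega> = (i = k - j)})"
    unfolding last_reset_event_def J_def[symmetric] by (rule prob_indep_pattern[OF indep]) (auto simp: J_def)
  also have "\<dots> = (\<Prod>i\<in>J. if i = k - j then p else 1 - p)"
    using meas p by (intro prod.cong refl) (auto simp: J_def prob_Collect_not)
  also have "\<dots> = (if j < k then p else 1) * (1 - p) ^ j"
  proof (cases "j < k")
    case True
    then have "J = insert (k - j) {k - j<..k}" by (auto simp: J_def)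
    with True show ?thesis by simp
  next
    case False
    with \<open>j \<le> k\<close> show ?thesis by (simp add: J_def)
  qed
  finally show ?thesis .
qed

lemma expectation_Pseq:
  assumes indep: "indep_vars (\<lambda>_. count_space UNIV)
                  (\<lambda>i \<omega>. case i of Inl k \<Rightarrow> lam k \<omega> | Inr k \<Rightarrow> u k \<omega>) (Inl ` {1..} \<union> Inr ` {1..})"
    and lam: "\<And>k. k \<ge> 1 \<Longrightarrow> prob {\<omega> \<in> space M. \<not> lam k \<omega>} = gbar"
    and u: "\<And>k. k \<ge> 1 \<Longrightarrow> prob {\<omega> \<in> space M. \<not> u k \<omega>} = mu"
    and p: "p = (1 - gbar) * (1 - mu)"
  shows "expectation (\<lambda>\<omega>. Pseq A Q Pbar P0 lam u k \<omega>)
    = (\<Sum>j<k. (p * (1 - p) ^ j) *\<^sub>R (lyap_step A Q ^^ j) Pbar) + (1 - p) ^ k *\<^sub>R (lyap_step A Q ^^ k) P0"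
proof -
  define b where "b = (\<lambda>i \<omega>. lam i \<omega> \<and> u i \<omega>)"
  have indep_b: "indep_vars (\<lambda>_. count_space UNIV) b {1..}"
    unfolding b_def by (rule indep_vars_conj[OF indep])
  have pb: "prob {\<omega> \<in> space M. b i \<omega>} = p" if "1 \<le> i" for i
    using prob_conj_indep[OF indep, of i] lam u that p by (simp add: b_def)
  have "expectation (\<lambda>\<omega>. Pseq A Q Pbar P0 lam u k \<omega>)
      = (\<Sum>j\<le>k. prob (last_reset_event M b k j) *\<^sub>R (lyap_step A Q ^^ j) (if j < k then Pbar else P0))"
  proof (rule expectation_eq_sum_partition)
    show "last_reset_event M b k j \<in> events" for j
      using indep_b unfolding indep_vars_def by (intro last_reset_event_in_events) auto
    show "\<exists>j\<in>{..k}. \<omega> \<in> last_reset_event M b k j" if "\<omega> \<in> space M" for \<omega>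
      using last_reset_event_cover[OF that] by (metis atMost_iff)
    show "Pseq A Q Pbar P0 lam u k \<omega> = (lyap_step A Q ^^ j) (if j < k then Pbar else P0)"
      if "j \<in> {..k}" "\<omega> \<in> last_reset_event M b k j" for j \<omega>
      using that unfolding b_def by (intro Pseq_on_last_reset_event) auto
  qed (simp_all add: disjoint_last_reset_events)
  also have "\<dots> = (\<Sum>j<k. (p * (1 - p) ^ j) *\<^sub>R (lyap_step A Q ^^ j) Pbar) + (1 - p) ^ k *\<^sub>R (lyap_step A Q ^^ k) P0"
    unfolding lessThan_Suc_atMost[symmetric] sum.lessThan_Suc
    by (simp add: prob_last_reset_event[OF indep_b pb])
  finally show ?thesis .
qed

end

section \<open>The expected covariance\<close>

lemma tendsto_geometric_mixture:
  fixes F G :: "nat \<Rightarrow> 'a::banach"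
  assumes p: "0 < p" "p < 1" and F: "Bseq F" and G: "Bseq G"
  shows "summable (\<lambda>j. (p * (1 - p) ^ j) *\<^sub>R F j)"
    and "(\<lambda>k. (\<Sum>j<k. (p * (1 - p) ^ j) *\<^sub>R F j) + (1 - p) ^ k *\<^sub>R G k) \<longlonglongrightarrow> (\<Sum>j. (p * (1 - p) ^ j) *\<^sub>R F j)"
proof -
  obtain KF where KF: "\<And>j. norm (F j) \<le> KF" using BseqD[OF F] by blast
  obtain KG where KG: "\<And>k. norm (G k) \<le> KG" using BseqD[OF G] by blast
  have geom: "summable (\<lambda>j. (1 - p) ^ j)" "(\<lambda>k. (1 - p) ^ k) \<longlonglongrightarrow> 0"
    using p by (auto intro!: summable_geometric LIMSEQ_power_zero)
  have "norm ((p * (1 - p) ^ j) *\<^sub>R F j) \<le> p * KF * (1 - p) ^ j" for j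
    using p KF[of j] by (simp add: mult_left_mono mult.commute mult.left_commute)
  then show sum: "summable (\<lambda>j. (p * (1 - p) ^ j) *\<^sub>R F j)"
    by (rule summable_comparison_test'[OF summable_mult[OF geom(1)]])
  have "(\<lambda>k. (1 - p) ^ k *\<^sub>R G k) \<longlonglongrightarrow> 0"
  proof (rule Lim_null_comparison)
    show "\<forall>\<^sub>F k in sequentially. norm ((1 - p) ^ k *\<^sub>R G k) \<le> (1 - p) ^ k * KG"
      using p KG by (simp add: mult_left_mono)
    show "(\<lambda>k. (1 - p) ^ k * KG) \<longlonglongrightarrow> 0" using tendsto_mult_left_zero[OF geom(2)] .
  qed
  from tendsto_add[OF summable_LIMSEQ[OF sum] this]
  show "(\<lambda>k. (\<Sum>j<k. (p * (1 - p) ^ j) *\<^sub>R F j) + (1 - p) ^ k *\<^sub>R G k) \<longlonglongrightarrow> (\<Sum>j. (p * (1 - p) ^ j) *\<^sub>R F j)"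
    by simp
qed

lemma geometric_mixture_less:
  fixes a :: "nat \<Rightarrow> real"
  assumes p: "0 < p" "p < 1" and sum: "summable (\<lambda>j. p * (1 - p) ^ j * a j)"
    and le: "\<And>j. a j \<le> c" and less: "a 0 < c"
  shows "(\<Sum>j. p * (1 - p) ^ j * a j) < c"
proof -
  have "(\<lambda>j. p * (1 - p) ^ j) sums (p * (1 / (1 - (1 - p))))"
    using p by (intro sums_mult geometric_sums) auto
  then have w: "(\<lambda>j. p * (1 - p) ^ j * c) sums c" using p sums_mult2 by fastforce
  have "0 < (\<Sum>j. p * (1 - p) ^ j * c - p * (1 - p) ^ j * a j)"
  proof (rule suminf_pos2)
    show "summable (\<lambda>j. p * (1 - p) ^ j * c - p * (1 - p) ^ j * a j)"
      using w sum by (intro summable_diff) (auto simp: sums_iff)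
    show "0 \<le> p * (1 - p) ^ j * c - p * (1 - p) ^ j * a j" for j
      using p le[of j] by (simp add: right_diff_distrib[symmetric])
    show "0 < p * (1 - p) ^ 0 * c - p * (1 - p) ^ 0 * a 0" using p less by simp
  qed
  then show ?thesis using suminf_diff[OF sums_summable[OF w] sum] w by (simp add: sums_iff)
qed

theorem lemma5:
  fixes A Q Pbar P0 :: "real^'n^'n" and C :: "real^'n^'m" and R :: "real^'m^'m"
    and M :: "'w measure" and lam u :: "nat \<Rightarrow> 'w \<Rightarrow> bool"
    and gbar mu :: real
  assumes rhoA: "spectral_radius A < 1"
    and QPD: "pos_def Q" and RPD: "pos_def R"
    and obs: "observable A C" and ctrl: "controllable A (msqrt Q)"
    and Pbar_pd: "pos_def Pbar"
    and Pbar_ric: "Pbar = riccati A C Q R Pbar"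
    and Pbar_stab: "spectral_radius ((mat 1 - kgain A C Q R Pbar ** C) ** A) < 1"
    and gbar: "0 < gbar" "gbar < 1" and mu: "0 < mu" "mu < 1"
    and P0: "pos_semidef P0"
    and M: "prob_space M"
    and indep: "prob_space.indep_vars M (\<lambda>_. count_space UNIV)
                  (\<lambda>i \<omega>. case i of Inl k \<Rightarrow> lam k \<omega> | Inr k \<Rightarrow> u k \<omega>)
                  (Inl ` {1..} \<union> Inr ` {1..})"
    and lam_dist: "\<And>k. k \<ge> 1 \<Longrightarrow> measure M {\<omega> \<in> space M. \<not> lam k \<omega>} = gbar"
    and u_dist: "\<And>k. k \<ge> 1 \<Longrightarrow> measure M {\<omega> \<in> space M. \<not> u k \<omega>} = mu"
  shows "convergent (\<lambda>k. prob_space.expectation M (\<lambda>\<omega>. Pseq A Q Pbar P0 lam u k \<omega>)) \<and>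
         trace (lim (\<lambda>k. prob_space.expectation M (\<lambda>\<omega>. Pseq A Q Pbar P0 lam u k \<omega>)))
           < trace (Lyap A Q)"
proof -
  (* ctrl, Pbar_stab and P0 only single out Pbar and the initial value in the paper: the bound
     holds for every positive semidefinite Riccati fixpoint and every P0. *)
  interpret prob_space M by (rule M)
  define p where "p = (1 - gbar) * (1 - mu)"
  have "(1 - gbar) * (1 - mu) < 1 * 1" using gbar mu by (intro mult_strict_mono) auto
  then have p: "0 < p" "p < 1" using gbar mu by (auto simp: p_def)
  define F where "F j = (lyap_step A Q ^^ j) Pbar" for j
  define w where "w j = p * (1 - p) ^ j" for j
  have "convergent (\<lambda>j. (lyap_step A Q ^^ j) X)" for X
    using lyap_step_iterates_tendsto[OF rhoA] by (rule convergentI)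
  then have Bseq: "Bseq F" "Bseq (\<lambda>k. (lyap_step A Q ^^ k) P0)"
    unfolding F_def by (simp_all add: convergent_imp_Bseq)
  note mixture = tendsto_geometric_mixture[OF p Bseq]
  have E: "(\<lambda>k. expectation (\<lambda>\<omega>. Pseq A Q Pbar P0 lam u k \<omega>)) \<longlonglongrightarrow> (\<Sum>j. w j *\<^sub>R F j)"
    using mixture(2) by (simp add: expectation_Pseq[OF indep lam_dist u_dist p_def] F_def w_def)
  have "trace (\<Sum>j. w j *\<^sub>R F j) = (\<Sum>j. w j * trace (F j))"
    using bounded_linear.suminf[OF bounded_linear_trace mixture(1)] by (simp add: w_def F_def trace_scaleR)
  also have "\<dots> < trace (Lyap A Q)"
  proof -
    note below = riccati_fixpoint_below_Lyap[OF rhoA QPD RPD pos_def_imp_pos_semidef[OF Pbar_pd]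
        Pbar_ric observable_imp_nonzero[OF obs]]
    have "summable (\<lambda>j. w j * trace (F j))"
      using bounded_linear.summable[OF bounded_linear_trace mixture(1)] by (simp add: w_def F_def trace_scaleR)
    then show ?thesis
      unfolding w_def using p trace_lyap_step_iterates_le[OF rhoA below(1)] below(2)
      by (intro geometric_mixture_less) (auto simp: F_def)
  qed
  finally show ?thesis using E by (auto simp: convergent_def limI)
qed

end
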